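(* Let $\Gamma$ be an $\mathbb N$-metrised graph without loops, and let $G$ be its underlying graph. Let $H$ be the graph obtained from $G$ by subdividing every edge $\{e,i(e)\}$ exactly $l(e)-1$ times. Then $\operatorname{dgon}(\Gamma)\ge\operatorname{dgon}(H)$.
   Context: A graph is $(X,r,i)$, $X$ finite, $r$ idempotent, $i$ an involution, $i(x)=x\iff r(x)=x$; vertices $V$ = fixed points, half-edges $H=X\setminus V$, edges $\{e,i(e)\}$ joining $r(e),r(i(e))$, $H_v=\{e\in H:r(e)=v\}$; graphs are connected. A loop is an edge with $r(e)=r(i(e))$. An $\mathbb N$-metrised graph adds $l:X\to\mathbb N$ with $l(i(x))=l(x)$, $l(x)=0\iff x\in V$; its underlying graph is $(X,r,i)$. A subdivision operation replaces an edge $\{e,i(e)\}$ by a new vertex $w$ and two edges joining $r(e)$ to $w$ and $w$ to $r(i(e))$. For an $\mathbb N$-metrised graph: $\operatorname{PL}(\Gamma)=\{g:V\to\mathbb Z: g(r(e))-g(r(i(e)))\in l(e)\mathbb Z\ \forall e\}$; $\Delta(g)=\sum_v\big(\sum_{e\in H_v}\frac{g(v)-g(r(i(e)))}{l(e)}\big)[v]$; $D\sim D'$ iff $D-D'\in\Delta(\operatorname{PL})$; $|D|=\{E\ge0:E\sim D\}$; $r(D)=\max\{k:|D-F|\ne\emptyset$ for all effective $F$ of degree $k\}$; $\operatorname{dgon}=\min\{\deg D: r(D)\ge1\}$. The divisorial gonality of an unmetrised graph is that of the $\mathbb N$-metrised graph with all edge lengths $1$. *)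

theory Defs
  imports Main
begin

definition vertices :: "'a set \<Rightarrow> ('a \<Rightarrow> 'a) \<Rightarrow> 'a set" where
  "vertices X r = {x \<in> X. r x = x}"

definition half_edges :: "'a set \<Rightarrow> ('a \<Rightarrow> 'a) \<Rightarrow> 'a set" where
  "half_edges X r = {x \<in> X. r x \<noteq> x}"

definition adjacent :: "'a set \<Rightarrow> ('a \<Rightarrow> 'a) \<Rightarrow> ('a \<Rightarrow> 'a) \<Rightarrow> ('a \<times> 'a) set" where
  "adjacent X r i = {(r e, r (i e)) | e. e \<in> half_edges X r}"

definition is_graph :: "'a set \<Rightarrow> ('a \<Rightarrow> 'a) \<Rightarrow> ('a \<Rightarrow> 'a) \<Rightarrow> bool" where
  "is_graph X r i \<longleftrightarrow> finite X \<and> X \<noteq> {} \<and>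
     (\<forall>x\<in>X. r x \<in> X \<and> i x \<in> X \<and> r (r x) = r x \<and> i (i x) = x \<and> (i x = x \<longleftrightarrow> r x = x)) \<and>
     (\<forall>u\<in>vertices X r. \<forall>v\<in>vertices X r. (u, v) \<in> (adjacent X r i)\<^sup>*)"

definition is_Nmetrised_graph ::
  "'a set \<Rightarrow> ('a \<Rightarrow> 'a) \<Rightarrow> ('a \<Rightarrow> 'a) \<Rightarrow> ('a \<Rightarrow> nat) \<Rightarrow> bool" where
  "is_Nmetrised_graph X r i l \<longleftrightarrow> is_graph X r i \<and>
     (\<forall>x\<in>X. l (i x) = l x \<and> (l x = 0 \<longleftrightarrow> r x = x))"

definition divisors :: "'a set \<Rightarrow> ('a \<Rightarrow> 'a) \<Rightarrow> ('a \<Rightarrow> int) set" where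
  "divisors X r = {D. \<forall>x. x \<notin> vertices X r \<longrightarrow> D x = 0}"

definition effective :: "('a \<Rightarrow> int) \<Rightarrow> bool" where
  "effective D \<longleftrightarrow> (\<forall>x. D x \<ge> 0)"

definition deg :: "'a set \<Rightarrow> ('a \<Rightarrow> 'a) \<Rightarrow> ('a \<Rightarrow> int) \<Rightarrow> int" where
  "deg X r D = (\<Sum>v\<in>vertices X r. D v)"

definition PL :: "'a set \<Rightarrow> ('a \<Rightarrow> 'a) \<Rightarrow> ('a \<Rightarrow> 'a) \<Rightarrow> ('a \<Rightarrow> nat) \<Rightarrow> ('a \<Rightarrow> int) set" where
  "PL X r i l = {g. \<forall>e\<in>half_edges X r. int (l e) dvd (g (r e) - g (r (i e)))}"

definition laplacian ::
  "'a set \<Rightarrow> ('a \<Rightarrow> 'a) \<Rightarrow> ('a \<Rightarrow> 'a) \<Rightarrow> ('a \<Rightarrow> nat) \<Rightarrow> ('a \<Rightarrow> int) \<Rightarrow> ('a \<Rightarrow> int)" where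
  "laplacian X r i l g = (\<lambda>v. if v \<in> vertices X r then
      (\<Sum>e\<in>{e\<in>half_edges X r. r e = v}. (g v - g (r (i e))) div int (l e)) else 0)"

definition lin_equiv ::
  "'a set \<Rightarrow> ('a \<Rightarrow> 'a) \<Rightarrow> ('a \<Rightarrow> 'a) \<Rightarrow> ('a \<Rightarrow> nat) \<Rightarrow> ('a \<Rightarrow> int) \<Rightarrow> ('a \<Rightarrow> int) \<Rightarrow> bool" where
  "lin_equiv X r i l D D' \<longleftrightarrow> (\<exists>g\<in>PL X r i l. (\<lambda>x. D x - D' x) = laplacian X r i l g)"

definition linsys ::
  "'a set \<Rightarrow> ('a \<Rightarrow> 'a) \<Rightarrow> ('a \<Rightarrow> 'a) \<Rightarrow> ('a \<Rightarrow> nat) \<Rightarrow> ('a \<Rightarrow> int) \<Rightarrow> ('a \<Rightarrow> int) set" where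
  "linsys X r i l D = {E \<in> divisors X r. effective E \<and> lin_equiv X r i l E D}"

definition rank ::
  "'a set \<Rightarrow> ('a \<Rightarrow> 'a) \<Rightarrow> ('a \<Rightarrow> 'a) \<Rightarrow> ('a \<Rightarrow> nat) \<Rightarrow> ('a \<Rightarrow> int) \<Rightarrow> int" where
  "rank X r i l D = (GREATEST k::int. \<forall>F \<in> divisors X r. effective F \<and> deg X r F = k \<longrightarrow>
      linsys X r i l (\<lambda>x. D x - F x) \<noteq> {})"

definition dgon :: "'a set \<Rightarrow> ('a \<Rightarrow> 'a) \<Rightarrow> ('a \<Rightarrow> 'a) \<Rightarrow> ('a \<Rightarrow> nat) \<Rightarrow> int" where
  "dgon X r i l = (LEAST d::int. \<exists>D\<in>divisors X r. rank X r i l D \<ge> 1 \<and> deg X r D = d)"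

datatype 'a snode = SV 'a | SM 'a nat | SE 'a nat

text \<open>Canonical representative of the edge {e, i e} (depends only on the set).\<close>
definition edge_rep :: "('a \<Rightarrow> 'a) \<Rightarrow> 'a \<Rightarrow> 'a" where
  "edge_rep i e = (SOME x. x \<in> {e, i e})"

text \<open>The vertex of the subdivided path at distance j from r e along the edge of e.\<close>
definition sub_node :: "('a \<Rightarrow> 'a) \<Rightarrow> ('a \<Rightarrow> 'a) \<Rightarrow> ('a \<Rightarrow> nat) \<Rightarrow> 'a \<Rightarrow> nat \<Rightarrow> 'a snode" where
  "sub_node r i l e j = (if j = 0 then SV (r e) else if j = l e then SV (r (i e))
      else if edge_rep i e = e then SM e j else SM (i e) (l e - j))"

definition subd_X :: "'a set \<Rightarrow> ('a \<Rightarrow> 'a) \<Rightarrow> ('a \<Rightarrow> 'a) \<Rightarrow> ('a \<Rightarrow> nat) \<Rightarrow> 'a snode set" where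
  "subd_X X r i l = SV ` vertices X r
     \<union> {SM c j | c j. c \<in> half_edges X r \<and> edge_rep i c = c \<and> 1 \<le> j \<and> j < l c}
     \<union> {SE e j | e j. e \<in> half_edges X r \<and> j < l e}"

fun subd_r :: "('a \<Rightarrow> 'a) \<Rightarrow> ('a \<Rightarrow> 'a) \<Rightarrow> ('a \<Rightarrow> nat) \<Rightarrow> 'a snode \<Rightarrow> 'a snode" where
  "subd_r r i l (SE e j) = sub_node r i l e j"
| "subd_r r i l x = x"

text \<open>Half-edge SE e j goes from distance j to distance j+1 (from r e); its
  opposite is SE (i e) (l e - 1 - j).\<close>
fun subd_i :: "('a \<Rightarrow> 'a) \<Rightarrow> ('a \<Rightarrow> nat) \<Rightarrow> 'a snode \<Rightarrow> 'a snode" where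
  "subd_i i l (SE e j) = SE (i e) (l e - 1 - j)"
| "subd_i i l x = x"

fun unit_len :: "'a snode \<Rightarrow> nat" where
  "unit_len (SE e j) = 1"
| "unit_len x = 0"

end

theory Submission
  imports Defs
begin

text \<open>Lift a divisor \<open>D\<close> of rank at least one on \<open>\<Gamma>\<close> to \<open>H\<close> by keeping its chips on the original
  vertices. A piecewise linear function on \<open>\<Gamma>\<close>, interpolated linearly along the subdivided edges,
  has as unit Laplacian on \<open>H\<close> exactly the lift of its Laplacian on \<open>\<Gamma>\<close>; so linear equivalences
  lift, and every original vertex of \<open>H\<close> can receive a chip. A new vertex \<open>q\<close> is interior to a
  path of chip-free degree-two vertices whose ends can receive a chip, and then so can \<open>q\<close>: otherwise
  a \<open>q\<close>-reduced representative has a chip to spare on both sides of \<open>q\<close>, and Dhar's burning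
  argument contradicts its reducedness. Hence the lift, of the same degree, has rank at least one.\<close>

section \<open>Chip firing with unit edge lengths\<close>

definition half_edge_graph :: "'a set \<Rightarrow> ('a \<Rightarrow> 'a) \<Rightarrow> ('a \<Rightarrow> 'a) \<Rightarrow> bool" where
  "half_edge_graph X r i \<longleftrightarrow> finite X \<and>
     (\<forall>e\<in>half_edges X r. i e \<in> half_edges X r \<and> i (i e) = e \<and> r e \<in> vertices X r)"

definition connected_graph :: "'a set \<Rightarrow> ('a \<Rightarrow> 'a) \<Rightarrow> ('a \<Rightarrow> 'a) \<Rightarrow> bool" where
  "connected_graph X r i \<longleftrightarrow> (\<forall>u\<in>vertices X r. \<forall>v\<in>vertices X r. (u, v) \<in> (adjacent X r i)\<^sup>*)"

definition unit_lap :: "'a set \<Rightarrow> ('a \<Rightarrow> 'a) \<Rightarrow> ('a \<Rightarrow> 'a) \<Rightarrow> ('a \<Rightarrow> int) \<Rightarrow> 'a \<Rightarrow> int" where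
  "unit_lap X r i h v = (\<Sum>e\<in>{e\<in>half_edges X r. r e = v}. h v - h (r (i e)))"

definition effective_after :: "'a set \<Rightarrow> ('a \<Rightarrow> 'a) \<Rightarrow> ('a \<Rightarrow> 'a) \<Rightarrow> ('a \<Rightarrow> int) \<Rightarrow> ('a \<Rightarrow> int) \<Rightarrow> bool" where
  "effective_after X r i D h \<longleftrightarrow> (\<forall>v\<in>vertices X r. 0 \<le> D v + unit_lap X r i h v)"

definition chip_reachable :: "'a set \<Rightarrow> ('a \<Rightarrow> 'a) \<Rightarrow> ('a \<Rightarrow> 'a) \<Rightarrow> ('a \<Rightarrow> int) \<Rightarrow> 'a \<Rightarrow> bool" where
  "chip_reachable X r i D v \<longleftrightarrow> (\<exists>h. effective_after X r i D h \<and> 1 \<le> D v + unit_lap X r i h v)"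

lemma half_edge_graphD:
  assumes "half_edge_graph X r i" "e \<in> half_edges X r"
  shows "i e \<in> half_edges X r" "i (i e) = e" "r e \<in> vertices X r" "r (i e) \<in> vertices X r"
  using assms unfolding half_edge_graph_def by auto

lemma half_edge_graph_finite:
  assumes "half_edge_graph X r i"
  shows "finite X" "finite (vertices X r)" "finite (half_edges X r)"
  using assms unfolding half_edge_graph_def vertices_def half_edges_def by auto

lemma bij_betw_involution_half_edges:
  assumes "half_edge_graph X r i"
  shows "bij_betw i (half_edges X r) (half_edges X r)"
  by (rule bij_betw_byWitness[of _ i]) (use half_edge_graphD[OF assms] in auto)

lemma sum_incident_antisym_eq_0:
  fixes \<phi> :: "'a \<Rightarrow> int"
  assumes G: "half_edge_graph X r i" and antisym: "\<forall>e\<in>half_edges X r. \<phi> (i e) = - \<phi> e"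
  shows "(\<Sum>v\<in>vertices X r. \<Sum>e\<in>{e\<in>half_edges X r. r e = v}. \<phi> e) = 0"
proof -
  let ?H = "half_edges X r"
  have "(\<Sum>v\<in>vertices X r. \<Sum>e\<in>{e\<in>?H. r e = v}. \<phi> e) = sum \<phi> ?H"
    using sum.group[of ?H "vertices X r" r \<phi>] half_edge_graph_finite[OF G] half_edge_graphD(3)[OF G]
    by auto
  moreover have "sum (\<phi> \<circ> i) ?H = sum \<phi> ?H"
    using sum.reindex_bij_betw[OF bij_betw_involution_half_edges[OF G]] by simp
  moreover have "sum (\<phi> \<circ> i) ?H = - sum \<phi> ?H"
    using antisym by (simp add: sum_negf[symmetric])
  ultimately show ?thesis by simp
qed

lemma sum_unit_lap_eq_0:
  assumes "half_edge_graph X r i"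
  shows "(\<Sum>v\<in>vertices X r. unit_lap X r i h v) = 0"
proof -
  have "(\<Sum>v\<in>vertices X r. unit_lap X r i h v) =
     (\<Sum>v\<in>vertices X r. \<Sum>e\<in>{e\<in>half_edges X r. r e = v}. h (r e) - h (r (i e)))"
    unfolding unit_lap_def by (intro sum.cong refl) auto
  also have "\<dots> = 0"
    by (rule sum_incident_antisym_eq_0[OF assms]) (use half_edge_graphD[OF assms] in auto)
  finally show ?thesis .
qed

lemma unit_lap_diff: "unit_lap X r i (\<lambda>v. f v - g v) v = unit_lap X r i f v - unit_lap X r i g v"
  unfolding unit_lap_def sum_subtractf[symmetric] by (intro sum.cong) auto

lemma unit_lap_add: "unit_lap X r i (\<lambda>v. f v + g v) v = unit_lap X r i f v + unit_lap X r i g v"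
  unfolding unit_lap_def sum.distrib[symmetric] by (intro sum.cong) auto

lemma unit_lap_diff_const: "unit_lap X r i (\<lambda>v. f v - c) v = unit_lap X r i f v"
  unfolding unit_lap_def by simp

lemma unit_lap_const: "unit_lap X r i (\<lambda>w. c) v = 0"
  unfolding unit_lap_def by simp

lemma unit_lap_cong:
  assumes "half_edge_graph X r i" "f v = g v" "\<forall>w\<in>vertices X r. f w = g w"
  shows "unit_lap X r i f v = unit_lap X r i g v"
  unfolding unit_lap_def using half_edge_graphD(4)[OF assms(1)] assms(2,3)
  by (intro sum.cong refl) auto

lemma unit_lap_antimono:
  assumes "half_edge_graph X r i" "f v = g v" "\<forall>w\<in>vertices X r. f w \<le> g w"
  shows "unit_lap X r i g v \<le> unit_lap X r i f v"
  unfolding unit_lap_def using half_edge_graphD(4)[OF assms(1)] assms(2,3)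
  by (intro sum_mono) auto

lemma unit_lap_min_ge:
  "f v \<le> g v \<Longrightarrow> unit_lap X r i f v \<le> unit_lap X r i (\<lambda>w. min (f w) (g w)) v"
  "g v \<le> f v \<Longrightarrow> unit_lap X r i g v \<le> unit_lap X r i (\<lambda>w. min (f w) (g w)) v"
  unfolding unit_lap_def by (auto intro!: sum_mono)

lemma effective_after_min:
  assumes "effective_after X r i D f" "effective_after X r i D g"
  shows "effective_after X r i D (\<lambda>w. min (f w) (g w))"
  unfolding effective_after_def
proof
  fix v assume v: "v \<in> vertices X r"
  have "0 \<le> D v + unit_lap X r i f v" "0 \<le> D v + unit_lap X r i g v"
    using assms v unfolding effective_after_def by auto
  then show "0 \<le> D v + unit_lap X r i (\<lambda>w. min (f w) (g w)) v"
    using unit_lap_min_ge[of f v g X r i] unit_lap_min_ge[of g v f X r i] by linarith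
qed

lemma effective_after_const:
  "\<forall>v\<in>vertices X r. 0 \<le> D v \<Longrightarrow> effective_after X r i D (\<lambda>w. c)"
  unfolding effective_after_def unit_lap_const by simp

lemma effective_after_cong:
  assumes "half_edge_graph X r i" "effective_after X r i D f" "\<forall>w\<in>vertices X r. f w = g w"
  shows "effective_after X r i D g"
  using assms unit_lap_cong[OF assms(1), of f _ g] unfolding effective_after_def by auto

lemma effective_after_diff_const:
  "effective_after X r i D (\<lambda>v. f v - c) \<longleftrightarrow> effective_after X r i D f"
  unfolding effective_after_def unit_lap_diff_const ..

lemma chip_reachable_iff_equiv:
  assumes equiv: "\<forall>v\<in>vertices X r. D' v - D v = unit_lap X r i g v" and y: "y \<in> vertices X r"
  shows "chip_reachable X r i D' y \<longleftrightarrow> chip_reachable X r i D y"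
proof -
  have shift: "D' v + unit_lap X r i h v = D v + unit_lap X r i (\<lambda>w. h w + g w) v"
    if "v \<in> vertices X r" for v h
    using equiv that unfolding unit_lap_add by (simp add: algebra_simps)
  have shift': "D' v + unit_lap X r i (\<lambda>w. h w - g w) v = D v + unit_lap X r i h v"
    if "v \<in> vertices X r" for v h
    using shift[OF that, of "\<lambda>w. h w - g w"] by simp
  show ?thesis
  proof
    assume "chip_reachable X r i D' y"
    then obtain h where "effective_after X r i D' h" "1 \<le> D' y + unit_lap X r i h y"
      unfolding chip_reachable_def by blast
    then show "chip_reachable X r i D y"
      unfolding chip_reachable_def effective_after_def using shift y by (intro exI[of _ "\<lambda>w. h w + g w"]) auto
  next
    assume "chip_reachable X r i D y"
    then obtain h where "effective_after X r i D h" "1 \<le> D y + unit_lap X r i h y"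
      unfolding chip_reachable_def by blast
    then show "chip_reachable X r i D' y"
      unfolding chip_reachable_def effective_after_def using shift' y by (intro exI[of _ "\<lambda>w. h w - g w"]) auto
  qed
qed

lemma harmonic_imp_const:
  assumes G: "half_edge_graph X r i" and conn: "connected_graph X r i"
    and harm: "\<forall>v\<in>vertices X r. unit_lap X r i f v = 0" and q: "q \<in> vertices X r"
    and v: "v \<in> vertices X r"
  shows "f v = f q"
proof -
  let ?V = "vertices X r"
  define M where "M = Max (f ` ?V)"
  have fin: "finite ?V" using half_edge_graph_finite[OF G] by simp
  have "M \<in> f ` ?V" using Max_in[of "f ` ?V"] fin q unfolding M_def by blast
  then obtain v0 where v0: "v0 \<in> ?V" "f v0 = M" by blast
  have le: "\<And>w. w \<in> ?V \<Longrightarrow> f w \<le> M" unfolding M_def using fin by simp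
  have edge: "f (r (i e)) = M" if e: "e \<in> half_edges X r" and fe: "f (r e) = M" for e
  proof -
    let ?S = "{e' \<in> half_edges X r. r e' = r e}"
    have nonneg: "0 \<le> f (r e) - f (r (i e'))" if "e' \<in> ?S" for e'
      using le[of "r (i e')"] fe half_edge_graphD(4)[OF G] that by simp
    have "finite ?S" using half_edge_graph_finite(3)[OF G] by simp
    moreover have "unit_lap X r i f (r e) = 0" using harm half_edge_graphD(3)[OF G e] by blast
    then have "(\<Sum>e'\<in>?S. f (r e) - f (r (i e'))) = 0" unfolding unit_lap_def .
    ultimately have "\<forall>e'\<in>?S. f (r e) - f (r (i e')) = 0"
      using sum_nonneg_eq_0_iff[of ?S "\<lambda>e'. f (r e) - f (r (i e'))"] nonneg by simp
    then have "f (r e) - f (r (i e)) = 0" using e by simp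
    then show ?thesis using fe by simp
  qed
  have reach: "f w = M" if "(v0, w) \<in> (adjacent X r i)\<^sup>*" for w
    using that
  proof (induction rule: rtrancl_induct)
    case base then show ?case using v0 by simp
  next
    case (step y z)
    then obtain e where "e \<in> half_edges X r" "y = r e" "z = r (i e)"
      unfolding adjacent_def by auto
    then show ?case using edge step.IH by simp
  qed
  have "f v = M" "f q = M"
    using reach conn v0(1) v q unfolding connected_graph_def by blast+
  then show ?thesis by simp
qed

definition normalised_scripts ::
  "'a set \<Rightarrow> ('a \<Rightarrow> 'a) \<Rightarrow> ('a \<Rightarrow> 'a) \<Rightarrow> ('a \<Rightarrow> int) \<Rightarrow> 'a \<Rightarrow> ('a \<Rightarrow> int) set" where
  "normalised_scripts X r i D q =
     {h. effective_after X r i D h \<and> h q = 0 \<and> (\<forall>v. v \<notin> vertices X r \<longrightarrow> h v = 0)}"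

text \<open>By the maximum principle a normalised script is determined by the effective divisor it
  produces, and there are only finitely many effective divisors of degree \<open>deg D\<close>.\<close>
lemma finite_normalised_scripts:
  assumes G: "half_edge_graph X r i" and conn: "connected_graph X r i" and q: "q \<in> vertices X r"
  shows "finite (normalised_scripts X r i D q)"
proof -
  let ?V = "vertices X r"
  let ?A = "normalised_scripts X r i D q"
  define fire where "fire h = (\<lambda>v. if v \<in> ?V then D v + unit_lap X r i h v else 0)" for h
  define d where "d = sum D ?V"
  have finV: "finite ?V" using half_edge_graph_finite[OF G] by simp
  have sub: "fire ` ?A \<subseteq> {E. \<forall>x. (x \<in> ?V \<longrightarrow> E x \<in> {0..d}) \<and> (x \<notin> ?V \<longrightarrow> E x = 0)}"
  proof clarify
    fix h x assume "h \<in> ?A"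
    then have nonneg: "\<forall>v\<in>?V. 0 \<le> D v + unit_lap X r i h v"
      unfolding normalised_scripts_def effective_after_def by auto
    have "(\<Sum>v\<in>?V. D v + unit_lap X r i h v) = d"
      unfolding d_def sum.distrib sum_unit_lap_eq_0[OF G] by simp
    then have "D v + unit_lap X r i h v \<le> d" if "v \<in> ?V" for v
      using member_le_sum[of v ?V "\<lambda>v. D v + unit_lap X r i h v"] nonneg that finV by auto
    then show "(x \<in> ?V \<longrightarrow> fire h x \<in> {0..d}) \<and> (x \<notin> ?V \<longrightarrow> fire h x = 0)"
      using nonneg unfolding fire_def by auto
  qed
  have "finite {E. \<forall>x. (x \<in> ?V \<longrightarrow> E x \<in> {0..d}) \<and> (x \<notin> ?V \<longrightarrow> E x = 0)}"
    by (rule finite_set_of_finite_funs) (use finV in auto)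
  then have fin: "finite (fire ` ?A)" using sub by (rule finite_subset[rotated])
  have inj: "inj_on fire ?A"
  proof (rule inj_onI, rule ext)
    fix h1 h2 v assume h1: "h1 \<in> ?A" and h2: "h2 \<in> ?A" and eq: "fire h1 = fire h2"
    have "\<forall>w\<in>?V. unit_lap X r i (\<lambda>w. h1 w - h2 w) w = 0"
    proof
      fix w assume "w \<in> ?V"
      then show "unit_lap X r i (\<lambda>w. h1 w - h2 w) w = 0"
        using fun_cong[OF eq, of w] unfolding fire_def unit_lap_diff by simp
    qed
    then have "v \<in> ?V \<Longrightarrow> h1 v - h2 v = h1 q - h2 q"
      using harmonic_imp_const[OF G conn _ q, of "\<lambda>w. h1 w - h2 w"] by blast
    then show "h1 v = h2 v"
      using h1 h2 unfolding normalised_scripts_def by (cases "v \<in> ?V") auto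
  qed
  show ?thesis using finite_imageD[OF fin inj] .
qed

lemma normalise_script:
  assumes "half_edge_graph X r i" "effective_after X r i D h" "h q = 0" "q \<in> vertices X r"
  shows "(\<lambda>v. if v \<in> vertices X r then h v else 0) \<in> normalised_scripts X r i D q"
  using assms effective_after_cong[OF assms(1,2)] unfolding normalised_scripts_def by auto

text \<open>The divisors produced by minimal scripts are the \<open>q\<close>-reduced divisors.\<close>
definition minimal_script ::
  "'a set \<Rightarrow> ('a \<Rightarrow> 'a) \<Rightarrow> ('a \<Rightarrow> 'a) \<Rightarrow> ('a \<Rightarrow> int) \<Rightarrow> 'a \<Rightarrow> ('a \<Rightarrow> int) \<Rightarrow> bool" where
  "minimal_script X r i D q h \<longleftrightarrow> h \<in> normalised_scripts X r i D q \<and>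
     (\<forall>g\<in>normalised_scripts X r i D q.
        (\<forall>v\<in>vertices X r. g v \<le> h v) \<longrightarrow> (\<forall>v\<in>vertices X r. g v = h v))"

lemma minimal_scriptD:
  assumes "minimal_script X r i D q hs"
  shows "hs \<in> normalised_scripts X r i D q"
    and "g \<in> normalised_scripts X r i D q \<Longrightarrow> (\<And>w. w \<in> vertices X r \<Longrightarrow> g w \<le> hs w) \<Longrightarrow>
      v \<in> vertices X r \<Longrightarrow> g v = hs v"
  using assms unfolding minimal_script_def by blast+

lemma minimal_script_exists:
  assumes G: "half_edge_graph X r i" and conn: "connected_graph X r i" and q: "q \<in> vertices X r"
    and h: "effective_after X r i D h"
  obtains hs where "minimal_script X r i D q hs"
proof -
  let ?V = "vertices X r"
  let ?A = "normalised_scripts X r i D q"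
  have "effective_after X r i D (\<lambda>v. h v - h q)"
    using h effective_after_diff_const by blast
  then have "(\<lambda>v. if v \<in> ?V then h v - h q else 0) \<in> ?A"
    by (rule normalise_script[OF G _ _ q]) simp
  moreover have "finite ?A" by (rule finite_normalised_scripts[OF G conn q])
  ultimately have "Min ((\<lambda>g. sum g ?V) ` ?A) \<in> (\<lambda>g. sum g ?V) ` ?A"
    and hs_min: "\<forall>g\<in>?A. Min ((\<lambda>g. sum g ?V) ` ?A) \<le> sum g ?V"
    by (auto intro: Min_in)
  then obtain hs where hs: "hs \<in> ?A" and "sum hs ?V = Min ((\<lambda>g. sum g ?V) ` ?A)"
    by auto
  have "\<forall>v\<in>?V. g v = hs v" if g: "g \<in> ?A" and le: "\<forall>v\<in>?V. g v \<le> hs v" for g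
  proof (rule ccontr)
    assume "\<not> (\<forall>v\<in>?V. g v = hs v)"
    then obtain v where "v \<in> ?V" "g v < hs v" using le by force
    then have "sum g ?V < sum hs ?V"
      using sum_strict_mono_ex1[OF half_edge_graph_finite(2)[OF G]] le by blast
    then show False using hs_min g \<open>sum hs ?V = _\<close> by fastforce
  qed
  then show thesis using hs that unfolding minimal_script_def by blast
qed

section \<open>Bare paths\<close>

definition bare_path :: "'a set \<Rightarrow> ('a \<Rightarrow> 'a) \<Rightarrow> ('a \<Rightarrow> 'a) \<Rightarrow> ('a \<Rightarrow> int) \<Rightarrow> (nat \<Rightarrow> 'a) \<Rightarrow> nat
   \<Rightarrow> (nat \<Rightarrow> 'a) \<Rightarrow> (nat \<Rightarrow> 'a) \<Rightarrow> bool" where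
  "bare_path X r i D x k a b \<longleftrightarrow> (\<forall>m\<le>k. x m \<in> vertices X r) \<and>
     (\<forall>m. 0 < m \<and> m < k \<longrightarrow> D (x m) = 0 \<and> {e\<in>half_edges X r. r e = x m} = {a m, b m} \<and>
        a m \<noteq> b m \<and> r (i (a m)) = x (m - 1) \<and> r (i (b m)) = x (m + 1))"

lemma bare_pathD:
  assumes "bare_path X r i D x k a b"
  shows "m \<le> k \<Longrightarrow> x m \<in> vertices X r"
    and "0 < m \<Longrightarrow> m < k \<Longrightarrow> D (x m) = 0"
    and "0 < m \<Longrightarrow> m < k \<Longrightarrow> {e\<in>half_edges X r. r e = x m} = {a m, b m}"
    and "0 < m \<Longrightarrow> m < k \<Longrightarrow> r (i (a m)) = x (m - 1)"
    and "0 < m \<Longrightarrow> m < k \<Longrightarrow> r (i (b m)) = x (m + 1)"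
  using assms unfolding bare_path_def by blast+

lemma unit_lap_bare_path:
  assumes "bare_path X r i D x k a b" "0 < m" "m < k"
  shows "unit_lap X r i h (x m) = 2 * h (x m) - h (x (m - 1)) - h (x (m + 1))"
proof -
  have "a m \<noteq> b m" using assms unfolding bare_path_def by blast
  then show ?thesis
    unfolding unit_lap_def bare_pathD(3)[OF assms] using bare_pathD(4,5)[OF assms] by simp
qed

lemma bare_path_reverse:
  assumes "bare_path X r i D x k a b"
  shows "bare_path X r i D (\<lambda>m. x (k - m)) k (\<lambda>m. b (k - m)) (\<lambda>m. a (k - m))"
  unfolding bare_path_def
proof (intro conjI allI impI)
  fix m assume "m \<le> k"
  then show "x (k - m) \<in> vertices X r" using bare_pathD(1)[OF assms] by simp
next
  fix m assume m: "0 < m \<and> m < k"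
  then have m': "0 < k - m" "k - m < k" "k - m - 1 = k - (m + 1)" "k - m + 1 = k - (m - 1)" by auto
  show "D (x (k - m)) = 0" using bare_pathD(2)[OF assms m'(1,2)] .
  show "{e\<in>half_edges X r. r e = x (k - m)} = {b (k - m), a (k - m)}"
    using bare_pathD(3)[OF assms m'(1,2)] by auto
  show "b (k - m) \<noteq> a (k - m)" using assms m'(1,2) unfolding bare_path_def by metis
  show "r (i (b (k - m))) = x (k - (m - 1))" using bare_pathD(5)[OF assms m'(1,2)] m'(4) by simp
  show "r (i (a (k - m))) = x (k - (m + 1))" using bare_pathD(4)[OF assms m'(1,2)] m'(3) by simp
qed

lemma concave_flat_end_le:
  fixes f :: "nat \<Rightarrow> int"
  assumes concave: "\<And>m. 0 < m \<Longrightarrow> m < j \<Longrightarrow> f (m - 1) + f (m + 1) \<le> 2 * f m"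
    and flat: "f (j - 1) = f j" and n: "n \<le> j"
  shows "f n \<le> f j"
proof -
  have step: "f (j - d - 1) \<le> f (j - d)" if "d < j" for d
    using that
  proof (induction d)
    case 0 then show ?case using flat by simp
  next
    case (Suc d)
    define m where "m = j - Suc d"
    have m: "0 < m" "m < j" "j - d = m + 1" "j - d - 1 = m" using Suc.prems unfolding m_def by auto
    have "f m \<le> f (m + 1)" using Suc m by simp
    then have "f (m - 1) \<le> f m" using concave[OF m(1,2)] by simp
    then show ?case unfolding m_def by simp
  qed
  have "f n \<le> f (n + d)" if "n + d \<le> j" for d
    using that
  proof (induction d)
    case (Suc d)
    have "j - (j - (n + d) - 1) - 1 = n + d" "j - (j - (n + d) - 1) = n + Suc d"
      using Suc.prems by auto
    then show ?case using Suc step[of "j - (n + d) - 1"] by simp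
  qed simp
  from this[of "j - n"] show ?thesis using n by simp
qed

lemma unreachable_interior_script_flat:
  assumes G: "half_edge_graph X r i" and Dnn: "\<forall>v\<in>vertices X r. 0 \<le> D v"
    and path: "bare_path X r i D x k a b" and j: "0 < j" "j < k"
    and unreach: "\<not> chip_reachable X r i D (x j)" and h: "effective_after X r i D h"
  shows "h (x (j - 1)) = h (x j)"
proof -
  let ?q = "x j"
  have lap_nonpos: "unit_lap X r i g ?q \<le> 0" if "effective_after X r i D g" for g
    using unreach that bare_pathD(2)[OF path j] unfolding chip_reachable_def by force
  have "effective_after X r i D (\<lambda>v. min (h v) (h ?q))"
    by (rule effective_after_min[OF h effective_after_const[OF Dnn]])
  from lap_nonpos[OF this] have "h ?q \<le> h (x (j - 1))" "h ?q \<le> h (x (j + 1))"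
    unfolding unit_lap_bare_path[OF path j] by auto
  moreover have "?q \<in> vertices X r" using bare_pathD(1)[OF path] j by simp
  then have "0 \<le> unit_lap X r i h ?q"
    using h bare_pathD(2)[OF path j] unfolding effective_after_def by force
  moreover note lap_nonpos[OF h]
  ultimately show "h (x (j - 1)) = h ?q"
    unfolding unit_lap_bare_path[OF path j] by linarith
qed

lemma effective_after_bare_path_concave:
  assumes path: "bare_path X r i D x k a b" and h: "effective_after X r i D h" and m: "0 < m" "m < k"
  shows "h (x (m - 1)) + h (x (m + 1)) \<le> 2 * h (x m)"
proof -
  have "0 \<le> D (x m) + unit_lap X r i h (x m)"
    using h bare_pathD(1)[OF path, of m] m unfolding effective_after_def by simp
  then show ?thesis using unit_lap_bare_path[OF path m] bare_pathD(2)[OF path m] by simp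
qed

lemma script_flat_along_bare_path:
  assumes path: "bare_path X r i D x k a b" and j: "j < k"
    and h: "effective_after X r i D h" and flat: "h (x (j - 1)) = h (x j)"
    and no_chip: "\<And>m. 0 < m \<Longrightarrow> m < j \<Longrightarrow> D (x m) + unit_lap X r i h (x m) < 1"
  shows "h (x 0) = h (x j)"
proof -
  have linear: "h (x (m - 1)) + h (x (m + 1)) = 2 * h (x m)" if "0 < m" "m < j" for m
  proof -
    have "0 \<le> D (x m) + unit_lap X r i h (x m)"
      using h bare_pathD(1)[OF path, of m] that j unfolding effective_after_def by simp
    then have "unit_lap X r i h (x m) = 0" using no_chip[OF that] bare_pathD(2)[OF path, of m] that j by simp
    then show ?thesis using unit_lap_bare_path[OF path that(1), of h] that j by simp
  qed
  have "h (x 0) \<le> h (x j)"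
    by (rule concave_flat_end_le[of j "\<lambda>m. h (x m)"]) (use linear flat in auto)
  moreover have "- h (x 0) \<le> - h (x j)"
  proof (rule concave_flat_end_le[of j "\<lambda>m. - h (x m)"])
    fix m assume "0 < m" "m < j"
    then show "- h (x (m - 1)) + - h (x (m + 1)) \<le> 2 * - h (x m)"
      using linear[of m] by linarith
  qed (use flat in simp_all)
  ultimately show ?thesis by simp
qed

lemma minimal_script_chip_before:
  assumes G: "half_edge_graph X r i" and Dnn: "\<forall>v\<in>vertices X r. 0 \<le> D v"
    and path: "bare_path X r i D x k a b" and j: "0 < j" "j < k"
    and unreach: "\<not> chip_reachable X r i D (x j)"
    and hs: "minimal_script X r i D (x j) hs"
    and reach0: "chip_reachable X r i D (x 0)"
  shows "\<exists>m<j. 1 \<le> D (x m) + unit_lap X r i hs (x m)"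
proof (rule ccontr)
  let ?V = "vertices X r"
  assume "\<not> ?thesis"
  then have no_chip: "D (x m) + unit_lap X r i hs (x m) < 1" if "m < j" for m
    using that by force
  have hs_eff: "effective_after X r i D hs" and hs_q: "hs (x j) = 0"
    using minimal_scriptD(1)[OF hs] unfolding normalised_scripts_def by auto
  have hs_0: "hs (x 0) = 0"
    using script_flat_along_bare_path[OF path j(2) hs_eff
        unreachable_interior_script_flat[OF G Dnn path j unreach hs_eff]] no_chip hs_q by simp
  obtain h1 where h1: "effective_after X r i D h1" "1 \<le> D (x 0) + unit_lap X r i h1 (x 0)"
    using reach0 unfolding chip_reachable_def by blast
  define h where "h v = h1 v - h1 (x 0)" for v
  have h_eff: "effective_after X r i D h" using h1(1) effective_after_diff_const unfolding h_def by blast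
  have h_0: "h (x 0) = 0" unfolding h_def by simp
  have "h (x 0) \<le> h (x j)"
    by (rule concave_flat_end_le[of j "\<lambda>m. h (x m)"])
      (use effective_after_bare_path_concave[OF path h_eff] j
         unreachable_interior_script_flat[OF G Dnn path j unreach h_eff] in auto)
  then have "(\<lambda>v. if v \<in> ?V then min (h v) (hs v) else 0) \<in> normalised_scripts X r i D (x j)"
    (is "?g \<in> _") using normalise_script[OF G effective_after_min[OF h_eff hs_eff], of "x j"]
      h_0 hs_q bare_pathD(1)[OF path] j by simp
  then have "?g v = hs v" if "v \<in> ?V" for v
    by (rule minimal_scriptD(2)[OF hs]) (use that in auto)
  then have "\<forall>v\<in>?V. hs v \<le> h v" by (metis min.cobounded1)
  then have "unit_lap X r i h (x 0) \<le> unit_lap X r i hs (x 0)"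
    using unit_lap_antimono[OF G, of hs "x 0" h] h_0 hs_0 by simp
  moreover have "1 \<le> D (x 0) + unit_lap X r i h (x 0)"
    using h1(2) unfolding h_def unit_lap_diff_const .
  ultimately show False using no_chip[of 0] j by simp
qed

lemma unit_lap_lower_outside:
  fixes h :: "'a \<Rightarrow> int"
  assumes G: "half_edge_graph X r i" and v: "v \<in> vertices X r"
  shows "v \<in> I \<Longrightarrow> unit_lap X r i h v \<le> unit_lap X r i (\<lambda>w. if w \<in> I then h w else h w - 1) v"
    and "v \<notin> I \<Longrightarrow> unit_lap X r i (\<lambda>w. if w \<in> I then h w else h w - 1) v =
      unit_lap X r i h v - int (card {e\<in>half_edges X r. r e = v \<and> r (i e) \<in> I})"
proof -
  let ?h' = "\<lambda>w. if w \<in> I then h w else h w - 1"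
  show "v \<in> I \<Longrightarrow> unit_lap X r i h v \<le> unit_lap X r i ?h' v"
    by (rule unit_lap_antimono[OF G]) auto
  let ?E = "{e\<in>half_edges X r. r e = v}"
  assume "v \<notin> I"
  then have "unit_lap X r i ?h' v = (\<Sum>e\<in>?E. (h v - h (r (i e))) - (if r (i e) \<in> I then 1 else 0))"
    unfolding unit_lap_def by (intro sum.cong) auto
  also have "\<dots> = unit_lap X r i h v - (\<Sum>e\<in>?E. if r (i e) \<in> I then 1 else 0)"
    unfolding unit_lap_def sum_subtractf ..
  also have "(\<Sum>e\<in>?E. if r (i e) \<in> I then 1 else 0) = (\<Sum>e\<in>{e\<in>?E. r (i e) \<in> I}. 1::int)"
    by (rule sum.inter_filter[symmetric]) (use half_edge_graph_finite(3)[OF G] in simp)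
  also have "{e\<in>?E. r (i e) \<in> I} = {e\<in>half_edges X r. r e = v \<and> r (i e) \<in> I}" by auto
  finally show "unit_lap X r i ?h' v = unit_lap X r i h v - int (card {e\<in>half_edges X r. r e = v \<and> r (i e) \<in> I})"
    by simp
qed

lemma half_edges_into_path_segment:
  assumes G: "half_edge_graph X r i" and path: "bare_path X r i D x k a b" and s: "s \<le> k"
    and v: "v \<notin> x ` {p<..<s}"
  shows "{e\<in>half_edges X r. r e = v \<and> r (i e) \<in> x ` {p<..<s}} \<subseteq>
    (if v = x p then {i (a (Suc p))} else {}) \<union> (if v = x s then {i (b (s - 1))} else {})"
proof
  fix e assume "e \<in> {e\<in>half_edges X r. r e = v \<and> r (i e) \<in> x ` {p<..<s}}"
  then obtain m where e: "e \<in> half_edges X r" "r e = v" and m: "p < m" "m < s" "r (i e) = x m"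
    by auto
  have ie: "i e \<in> half_edges X r" "i (i e) = e" using half_edge_graphD(1,2)[OF G e(1)] by auto
  have m_int: "0 < m" "m < k" using m s by auto
  then have "i e \<in> {a m, b m}" using bare_pathD(3)[OF path m_int] ie(1) m(3) by blast
  then consider "i e = a m" | "i e = b m" by blast
  then show "e \<in> (if v = x p then {i (a (Suc p))} else {}) \<union> (if v = x s then {i (b (s - 1))} else {})"
  proof cases
    case 1
    then have v_eq: "v = x (m - 1)" using bare_pathD(4)[OF path m_int] ie(2) e(2) by metis
    have "m - 1 \<notin> {p<..<s}"
    proof
      assume "m - 1 \<in> {p<..<s}"
      then have "v \<in> x ` {p<..<s}" unfolding v_eq by (rule imageI)
      then show False using v by contradiction
    qed
    then have "m = Suc p" using m by auto
    then show ?thesis using 1 ie(2) v_eq by auto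
  next
    case 2
    then have v_eq: "v = x (m + 1)" using bare_pathD(5)[OF path m_int] ie(2) e(2) by metis
    have "m + 1 \<notin> {p<..<s}"
    proof
      assume "m + 1 \<in> {p<..<s}"
      then have "v \<in> x ` {p<..<s}" unfolding v_eq by (rule imageI)
      then show False using v by contradiction
    qed
    then have "m = s - 1" using m by auto
    then show ?thesis using 2 ie(2) v_eq m by auto
  qed
qed

text \<open>Dhar's burning step: every vertex outside the segment can fire once, because only the two
  ends of the segment lose chips, one each, and both have one to spare.\<close>

lemma effective_after_lower_outside_segment:
  assumes G: "half_edge_graph X r i" and path: "bare_path X r i D x k a b"
    and inj: "inj_on x {..k}" and ps: "p < s" "s \<le> k"
    and hs: "effective_after X r i D hs"
    and chip_p: "1 \<le> D (x p) + unit_lap X r i hs (x p)"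
    and chip_s: "1 \<le> D (x s) + unit_lap X r i hs (x s)"
  shows "effective_after X r i D (\<lambda>v. if v \<in> x ` {p<..<s} then hs v else hs v - 1)"
  unfolding effective_after_def
proof
  let ?I = "x ` {p<..<s}"
  fix v assume v: "v \<in> vertices X r"
  let ?C = "{e\<in>half_edges X r. r e = v \<and> r (i e) \<in> ?I}"
  have nonneg: "0 \<le> D v + unit_lap X r i hs v" using hs v unfolding effective_after_def by blast
  show "0 \<le> D v + unit_lap X r i (\<lambda>v. if v \<in> ?I then hs v else hs v - 1) v"
  proof (cases "v \<in> ?I")
    case True
    then show ?thesis using unit_lap_lower_outside(1)[OF G v, of ?I hs] nonneg by simp
  next
    case False
    have ends: "x p \<noteq> x s" using inj_onD[OF inj, of p s] ps by auto
    have sub: "?C \<subseteq> (if v = x p then {i (a (Suc p))} else {}) \<union> (if v = x s then {i (b (s - 1))} else {})"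
      by (rule half_edges_into_path_segment[OF G path ps(2) False])
    have "int (card ?C) \<le> D v + unit_lap X r i hs v"
    proof (cases "v = x p \<or> v = x s")
      case True
      then obtain e where "?C \<subseteq> {e}" using sub ends by (auto split: if_splits)
      then have "card ?C \<le> 1" using card_mono[of "{e}"] by simp
      then show ?thesis using True chip_p chip_s by auto
    next
      case False
      then have "?C = {}" using sub by simp
      then show ?thesis using nonneg by (simp only: card.empty of_nat_0)
    qed
    then show ?thesis using unit_lap_lower_outside(2)[OF G v False, of hs] by simp
  qed
qed

text \<open>If \<open>x j\<close> cannot receive a chip, a minimal script normalised at \<open>x j\<close> (a reduced divisor)
  has a chip to spare on either side of \<open>x j\<close>, and Dhar's burning step between them produces a
  smaller normalised script.\<close>
lemma chip_reachable_bare_path_interior: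
  assumes G: "half_edge_graph X r i" and conn: "connected_graph X r i"
    and Dnn: "\<forall>v\<in>vertices X r. 0 \<le> D v"
    and path: "bare_path X r i D x k a b" and inj: "inj_on x {..k}" and j: "0 < j" "j < k"
    and reach0: "chip_reachable X r i D (x 0)" and reachk: "chip_reachable X r i D (x k)"
  shows "chip_reachable X r i D (x j)"
proof (rule ccontr)
  let ?V = "vertices X r"
  assume unreach: "\<not> chip_reachable X r i D (x j)"
  have xj: "x j \<in> ?V" using bare_pathD(1)[OF path] j by simp
  obtain h0 where "effective_after X r i D h0" using reach0 unfolding chip_reachable_def by blast
  then obtain hs where hs: "minimal_script X r i D (x j) hs"
    using minimal_script_exists[OF G conn xj] by blast
  have hs_eff: "effective_after X r i D hs" and hs_q: "hs (x j) = 0"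
    using minimal_scriptD(1)[OF hs] unfolding normalised_scripts_def by auto
  obtain p where p: "p < j" "1 \<le> D (x p) + unit_lap X r i hs (x p)"
    using minimal_script_chip_before[OF G Dnn path j unreach hs reach0] by blast
  have j': "0 < k - j" "k - j < k" and kj: "k - (k - j) = j" using j by auto
  obtain m where m: "m < k - j" "1 \<le> D (x (k - m)) + unit_lap X r i hs (x (k - m))"
    using minimal_script_chip_before[OF G Dnn bare_path_reverse[OF path] j'] unreach hs reachk
    unfolding kj by auto
  define s where "s = k - m"
  have s: "j < s" "s \<le> k" "1 \<le> D (x s) + unit_lap X r i hs (x s)"
    using m unfolding s_def by auto
  let ?h' = "\<lambda>v. if v \<in> x ` {p<..<s} then hs v else hs v - 1"
  have "effective_after X r i D ?h'"
    using effective_after_lower_outside_segment[OF G path inj _ s(2) hs_eff p(2) s(3)] p s by simp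
  moreover have "?h' (x j) = 0" using hs_q p s by auto
  ultimately have "(\<lambda>v. if v \<in> ?V then ?h' v else 0) \<in> normalised_scripts X r i D (x j)"
    (is "?g \<in> _") using normalise_script[OF G _ _ xj] by blast
  then have "?g (x p) = hs (x p)"
    by (rule minimal_scriptD(2)[OF hs]) (use bare_pathD(1)[OF path, of p] p j in auto)
  moreover have "x p \<notin> x ` {p<..<s}" using inj_onD[OF inj] p s by fastforce
  ultimately show False using bare_pathD(1)[OF path, of p] p j by simp
qed

section \<open>Rank and gonality of metrised graphs\<close>

definition metric_half_edge_graph :: "'a set \<Rightarrow> ('a \<Rightarrow> 'a) \<Rightarrow> ('a \<Rightarrow> 'a) \<Rightarrow> ('a \<Rightarrow> nat) \<Rightarrow> bool" where
  "metric_half_edge_graph X r i l \<longleftrightarrow> half_edge_graph X r i \<and> vertices X r \<noteq> {} \<and>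
     (\<forall>e\<in>half_edges X r. l (i e) = l e)"

lemma sum_laplacian_eq_0:
  assumes M: "metric_half_edge_graph X r i l" and g: "g \<in> PL X r i l"
  shows "(\<Sum>v\<in>vertices X r. laplacian X r i l g v) = 0"
proof -
  have G: "half_edge_graph X r i" using M unfolding metric_half_edge_graph_def by blast
  have "(\<Sum>v\<in>vertices X r. laplacian X r i l g v) =
     (\<Sum>v\<in>vertices X r. \<Sum>e\<in>{e\<in>half_edges X r. r e = v}. (g (r e) - g (r (i e))) div int (l e))"
    unfolding laplacian_def by (intro sum.cong refl) auto
  also have "\<dots> = 0"
  proof (rule sum_incident_antisym_eq_0[OF G], intro ballI)
    fix e assume e: "e \<in> half_edges X r"
    have "int (l e) dvd g (r e) - g (r (i e))" using g e unfolding PL_def by blast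
    then show "(g (r (i e)) - g (r (i (i e)))) div int (l (i e)) = - ((g (r e) - g (r (i e))) div int (l e))"
      using half_edge_graphD(2)[OF G e] M e dvd_neg_div[of "int (l e)" "g (r e) - g (r (i e))"]
      unfolding metric_half_edge_graph_def by simp
  qed
  finally show ?thesis .
qed

lemma deg_diff: "deg X r (\<lambda>x. D x - F x) = deg X r D - deg X r F"
  unfolding deg_def sum_subtractf ..

lemma deg_nonneg: "effective E \<Longrightarrow> 0 \<le> deg X r E"
  unfolding deg_def effective_def by (simp add: sum_nonneg)

lemma deg_indicator:
  assumes "finite (vertices X r)" "v \<in> vertices X r"
  shows "deg X r (\<lambda>x. if x = v then c else 0) = c"
  using assms unfolding deg_def by simp

lemma deg_lin_equiv:
  assumes M: "metric_half_edge_graph X r i l" and eq: "lin_equiv X r i l D1 D2"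
  shows "deg X r D1 = deg X r D2"
proof -
  obtain g where g: "g \<in> PL X r i l" "(\<lambda>x. D1 x - D2 x) = laplacian X r i l g"
    using eq unfolding lin_equiv_def by blast
  have "deg X r D1 - deg X r D2 = deg X r (\<lambda>x. D1 x - D2 x)" by (rule deg_diff[symmetric])
  also have "\<dots> = (\<Sum>v\<in>vertices X r. laplacian X r i l g v)" unfolding g(2) deg_def ..
  finally have "deg X r D1 - deg X r D2 = (\<Sum>v\<in>vertices X r. laplacian X r i l g v)" .
  then show ?thesis using sum_laplacian_eq_0[OF M g(1)] by simp
qed

lemma deg_nonneg_if_linsys:
  assumes "metric_half_edge_graph X r i l" "E \<in> linsys X r i l D"
  shows "0 \<le> deg X r D"
  using deg_lin_equiv[OF assms(1), of E D] deg_nonneg[of E X r] assms(2) unfolding linsys_def by simp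

lemma lin_equiv_refl: "lin_equiv X r i l D D"
  unfolding lin_equiv_def PL_def laplacian_def by (intro bexI[of _ "\<lambda>_. 0"]) auto

lemma int_Greatest_bounded:
  fixes P :: "int \<Rightarrow> bool"
  assumes "P k0" and bound: "\<And>k. P k \<Longrightarrow> k \<le> B"
  shows "P (Greatest P)" and "P k \<Longrightarrow> k \<le> Greatest P"
proof -
  let ?T = "{k. k0 \<le> k \<and> k \<le> B \<and> P k}"
  have fin: "finite ?T" by (rule finite_subset[of _ "{k0..B}"]) auto
  have "Max ?T \<in> ?T" using assms fin by (intro Max_in) auto
  moreover have ge: "k \<le> Max ?T" if "P k" for k
    using that bound fin \<open>Max ?T \<in> ?T\<close> by (cases "k0 \<le> k") (auto intro: Max_ge)
  ultimately have "Greatest P = Max ?T" by (intro Greatest_equality) auto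
  then show "P (Greatest P)" "P k \<Longrightarrow> k \<le> Greatest P" using \<open>Max ?T \<in> ?T\<close> ge by auto
qed

lemma int_Least_bounded:
  fixes P :: "int \<Rightarrow> bool"
  assumes "P k0" and bound: "\<And>k. P k \<Longrightarrow> B \<le> k"
  shows "P (Least P)" and "P k \<Longrightarrow> Least P \<le> k"
proof -
  let ?T = "{k. B \<le> k \<and> k \<le> k0 \<and> P k}"
  have fin: "finite ?T" by (rule finite_subset[of _ "{B..k0}"]) auto
  have "Min ?T \<in> ?T" using assms fin by (intro Min_in) auto
  moreover have le: "Min ?T \<le> k" if "P k" for k
    using that bound fin \<open>Min ?T \<in> ?T\<close> by (cases "k \<le> k0") (auto intro: Min_le)
  ultimately have "Least P = Min ?T" by (intro Least_equality) auto
  then show "P (Least P)" "P k \<Longrightarrow> Least P \<le> k" using \<open>Min ?T \<in> ?T\<close> le by auto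
qed

definition removable :: "'a set \<Rightarrow> ('a \<Rightarrow> 'a) \<Rightarrow> ('a \<Rightarrow> 'a) \<Rightarrow> ('a \<Rightarrow> nat) \<Rightarrow> ('a \<Rightarrow> int) \<Rightarrow> int \<Rightarrow> bool" where
  "removable X r i l D k \<longleftrightarrow> (\<forall>F \<in> divisors X r. effective F \<and> deg X r F = k \<longrightarrow>
      linsys X r i l (\<lambda>x. D x - F x) \<noteq> {})"

lemma removable_le_deg:
  assumes M: "metric_half_edge_graph X r i l" and k: "removable X r i l D k" "0 < k"
  shows "k \<le> deg X r D"
proof -
  have finV: "finite (vertices X r)"
    using M half_edge_graph_finite(2) unfolding metric_half_edge_graph_def by blast
  obtain v where v: "v \<in> vertices X r" using M unfolding metric_half_edge_graph_def by blast
  let ?F = "\<lambda>x. if x = v then k else 0"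
  have "?F \<in> divisors X r" "effective ?F" "deg X r ?F = k"
    using v k(2) deg_indicator[OF finV v] unfolding divisors_def effective_def by auto
  then obtain E where "E \<in> linsys X r i l (\<lambda>x. D x - ?F x)"
    using k(1) unfolding removable_def by blast
  from deg_nonneg_if_linsys[OF M this] show ?thesis
    unfolding deg_diff \<open>deg X r ?F = k\<close> by simp
qed

lemma
  assumes "metric_half_edge_graph X r i l"
  shows removable_rank: "removable X r i l D (rank X r i l D)"
    and removable_le_rank: "removable X r i l D k \<Longrightarrow> k \<le> rank X r i l D"
proof -
  have "removable X r i l D (-1)"
    unfolding removable_def using deg_nonneg[where X=X and r=r] by fastforce
  moreover have "k \<le> max 0 (deg X r D)" if "removable X r i l D k" for k
    using removable_le_deg[OF assms that] by (cases "0 < k") auto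
  moreover have "rank X r i l D = Greatest (removable X r i l D)"
    unfolding rank_def removable_def ..
  ultimately show "removable X r i l D (rank X r i l D)"
    and "removable X r i l D k \<Longrightarrow> k \<le> rank X r i l D"
    using int_Greatest_bounded[of "removable X r i l D"] by metis+
qed

lemma effective_deg_1_eq_indicator:
  assumes finV: "finite (vertices X r)"
    and F: "F \<in> divisors X r" "effective F" "deg X r F = 1"
  obtains v where "v \<in> vertices X r" "F = (\<lambda>x. if x = v then 1 else 0)"
proof -
  let ?V = "vertices X r"
  have nonneg: "\<And>x. 0 \<le> F x" using F(2) unfolding effective_def by blast
  have "\<exists>v\<in>?V. F v \<noteq> 0"
  proof (rule ccontr)
    assume "\<not> (\<exists>v\<in>?V. F v \<noteq> 0)"
    then have "deg X r F = 0" unfolding deg_def by simp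
    then show False using F(3) by simp
  qed
  then obtain v where v: "v \<in> ?V" "F v \<noteq> 0" by blast
  have split: "deg X r F = F v + sum F (?V - {v})"
    unfolding deg_def using sum.remove[OF finV v(1)] .
  have "0 \<le> sum F (?V - {v})" using nonneg by (simp add: sum_nonneg)
  then have Fv: "F v = 1" and rest: "sum F (?V - {v}) = 0"
    using split F(3) v(2) nonneg[of v] by auto
  have "\<forall>w\<in>?V - {v}. F w = 0" using rest sum_nonneg_eq_0_iff[of "?V - {v}" F] finV nonneg by auto
  moreover have "F x = 0" if "x \<notin> ?V" for x using F(1) that unfolding divisors_def by blast
  ultimately have "F = (\<lambda>x. if x = v then 1 else 0)"
    using Fv by (intro ext) (auto simp: v(1))
  then show thesis using that v(1) by blast
qed

lemma rank_ge_1_iff: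
  assumes M: "metric_half_edge_graph X r i l" and D: "D \<in> divisors X r"
  shows "1 \<le> rank X r i l D \<longleftrightarrow>
    (\<forall>v\<in>vertices X r. linsys X r i l (\<lambda>x. D x - (if x = v then 1 else 0)) \<noteq> {})"
proof
  have finV: "finite (vertices X r)"
    using M half_edge_graph_finite(2) unfolding metric_half_edge_graph_def by blast
  assume R: "1 \<le> rank X r i l D"
  let ?R = "rank X r i l D"
  show "\<forall>v\<in>vertices X r. linsys X r i l (\<lambda>x. D x - (if x = v then 1 else 0)) \<noteq> {}"
  proof
    fix v assume v: "v \<in> vertices X r"
    let ?F = "\<lambda>x. if x = v then ?R else 0"
    have "?F \<in> divisors X r" "effective ?F" "deg X r ?F = ?R"
      using v R deg_indicator[OF finV v] unfolding divisors_def effective_def by auto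
    then obtain E where E: "E \<in> linsys X r i l (\<lambda>x. D x - ?F x)"
      using removable_rank[OF M] unfolding removable_def by blast
    text \<open>Put back the \<open>rank - 1\<close> surplus chips at \<open>v\<close>.\<close>
    let ?E = "\<lambda>x. E x + (if x = v then ?R - 1 else 0)"
    have "(\<lambda>x. ?E x - (D x - (if x = v then 1 else 0))) = (\<lambda>x. E x - (D x - ?F x))" by auto
    then have "?E \<in> linsys X r i l (\<lambda>x. D x - (if x = v then 1 else 0))"
      using E R v unfolding linsys_def lin_equiv_def divisors_def effective_def by auto
    then show "linsys X r i l (\<lambda>x. D x - (if x = v then 1 else 0)) \<noteq> {}" by blast
  qed
next
  have finV: "finite (vertices X r)"
    using M half_edge_graph_finite(2) unfolding metric_half_edge_graph_def by blast
  assume "\<forall>v\<in>vertices X r. linsys X r i l (\<lambda>x. D x - (if x = v then 1 else 0)) \<noteq> {}"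
  then have "removable X r i l D 1"
    unfolding removable_def
    by (auto elim: effective_deg_1_eq_indicator[OF finV])
  then show "1 \<le> rank X r i l D" by (rule removable_le_rank[OF M])
qed

lemma rank_ge_1_imp_chip:
  assumes M: "metric_half_edge_graph X r i l" and D: "D \<in> divisors X r" "1 \<le> rank X r i l D"
    and v: "v \<in> vertices X r"
  obtains E where "E \<in> divisors X r" "effective E" "lin_equiv X r i l E D" "1 \<le> E v"
proof -
  obtain E' where E': "E' \<in> linsys X r i l (\<lambda>x. D x - (if x = v then 1 else 0))"
    using rank_ge_1_iff[OF M D(1)] D(2) v by blast
  let ?E = "\<lambda>x. E' x + (if x = v then 1 else 0)"
  have "(\<lambda>x. ?E x - D x) = (\<lambda>x. E' x - (D x - (if x = v then 1 else 0)))" by auto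
  then have "?E \<in> divisors X r" "effective ?E" "lin_equiv X r i l ?E D" "1 \<le> ?E v"
    using E' v unfolding linsys_def lin_equiv_def divisors_def effective_def by (auto simp: add_nonneg_nonneg)
  then show thesis by (rule that)
qed

lemma
  assumes M: "metric_half_edge_graph X r i l"
  shows dgon_attained: "\<exists>D\<in>divisors X r. 1 \<le> rank X r i l D \<and> deg X r D = dgon X r i l"
    and dgon_le: "D \<in> divisors X r \<Longrightarrow> 1 \<le> rank X r i l D \<Longrightarrow> dgon X r i l \<le> deg X r D"
proof -
  let ?V = "vertices X r"
  let ?P = "\<lambda>d. \<exists>D\<in>divisors X r. 1 \<le> rank X r i l D \<and> deg X r D = d"
  have finV: "finite ?V"
    using M half_edge_graph_finite(2) unfolding metric_half_edge_graph_def by blast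
  let ?D0 = "\<lambda>x. if x \<in> ?V then 1 else 0 :: int"
  have D0: "?D0 \<in> divisors X r" unfolding divisors_def by auto
  have "(\<lambda>x. ?D0 x - (if x = v then 1 else 0)) \<in> linsys X r i l (\<lambda>x. ?D0 x - (if x = v then 1 else 0))"
    if "v \<in> ?V" for v
    using that lin_equiv_refl unfolding linsys_def divisors_def effective_def by auto
  then have "1 \<le> rank X r i l ?D0" using rank_ge_1_iff[OF M D0] by blast
  then have P0: "?P (deg X r ?D0)" using D0 by blast
  have bound: "1 \<le> d" if "?P d" for d
  proof -
    obtain D where D: "D \<in> divisors X r" "1 \<le> rank X r i l D" "deg X r D = d" using \<open>?P d\<close> by blast
    obtain v where v: "v \<in> ?V" using M unfolding metric_half_edge_graph_def by blast
    then obtain E where "E \<in> linsys X r i l (\<lambda>x. D x - (if x = v then 1 else 0))"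
      using rank_ge_1_iff[OF M D(1)] D(2) by blast
    from deg_nonneg_if_linsys[OF M this] show "1 \<le> d"
      unfolding deg_diff deg_indicator[OF finV v] D(3) by simp
  qed
  have dgon_eq: "dgon X r i l = Least ?P" unfolding dgon_def ..
  show "\<exists>D\<in>divisors X r. 1 \<le> rank X r i l D \<and> deg X r D = dgon X r i l"
    unfolding dgon_eq by (rule int_Least_bounded(1)[of ?P, OF P0 bound])
  assume "D \<in> divisors X r" "1 \<le> rank X r i l D"
  then have "?P (deg X r D)" by blast
  from int_Least_bounded(2)[of ?P, OF P0 bound this]
  show "dgon X r i l \<le> deg X r D" unfolding dgon_eq .
qed

lemma laplacian_unit_lengths:
  assumes "\<forall>e\<in>half_edges X r. l e = 1"
  shows "laplacian X r i l g v = (if v \<in> vertices X r then unit_lap X r i g v else 0)"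
  unfolding laplacian_def unit_lap_def using assms by (auto intro!: sum.cong)

lemma PL_unit_lengths: "\<forall>e\<in>half_edges X r. l e = 1 \<Longrightarrow> g \<in> PL X r i l"
  unfolding PL_def by simp

lemma rank_ge_1_if_chip_reachable:
  assumes M: "metric_half_edge_graph X r i l" and unit: "\<forall>e\<in>half_edges X r. l e = 1"
    and D: "D \<in> divisors X r" and reach: "\<forall>y\<in>vertices X r. chip_reachable X r i D y"
  shows "1 \<le> rank X r i l D"
  unfolding rank_ge_1_iff[OF M D]
proof
  let ?V = "vertices X r"
  fix y assume y: "y \<in> ?V"
  obtain h where h: "effective_after X r i D h" "1 \<le> D y + unit_lap X r i h y"
    using reach y unfolding chip_reachable_def by blast
  let ?Dy = "\<lambda>z. D z - (if z = y then 1 else 0)"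
  let ?E = "\<lambda>z. if z \<in> ?V then ?Dy z + unit_lap X r i h z else 0"
  have "(\<lambda>z. ?E z - ?Dy z) = laplacian X r i l h"
    using D y unfolding laplacian_unit_lengths[OF unit] divisors_def by auto
  moreover have "0 \<le> ?E z" for z
    using h y unfolding effective_after_def by (cases "z \<in> ?V") auto
  ultimately have "?E \<in> linsys X r i l ?Dy"
    using PL_unit_lengths[OF unit] unfolding linsys_def lin_equiv_def divisors_def effective_def
    by auto
  then show "linsys X r i l ?Dy \<noteq> {}" by blast
qed

section \<open>The subdivided graph\<close>

definition lift_divisor :: "('a \<Rightarrow> int) \<Rightarrow> 'a snode \<Rightarrow> int" where
  "lift_divisor D y = (case y of SV v \<Rightarrow> D v | _ \<Rightarrow> 0)"

text \<open>Linear interpolation of \<open>g\<close> along the subdivided edges; \<open>SM c m\<close> lies at distance \<open>m\<close>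
  from \<open>r c\<close>.\<close>
definition interpolate :: "('a \<Rightarrow> 'a) \<Rightarrow> ('a \<Rightarrow> 'a) \<Rightarrow> ('a \<Rightarrow> nat) \<Rightarrow> ('a \<Rightarrow> int) \<Rightarrow> 'a snode \<Rightarrow> int" where
  "interpolate r i l g y = (case y of SV v \<Rightarrow> g v
      | SM c m \<Rightarrow> g (r c) + int m * ((g (r (i c)) - g (r c)) div int (l c)) | SE _ _ \<Rightarrow> 0)"

lemma edge_rep_in: "edge_rep i e \<in> {e, i e}"
  unfolding edge_rep_def by (rule someI[of _ e]) simp

lemma edge_rep_involution: "i (i e) = e \<Longrightarrow> edge_rep i (i e) = edge_rep i e"
  unfolding edge_rep_def by (simp add: insert_commute)

locale subdivision =
  fixes X :: "'a set" and r i :: "'a \<Rightarrow> 'a" and l :: "'a \<Rightarrow> nat"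
  assumes metrised: "is_Nmetrised_graph X r i l"
begin

abbreviation "V \<equiv> vertices X r"
abbreviation "HE \<equiv> half_edges X r"
abbreviation "XH \<equiv> subd_X X r i l"
abbreviation "rH \<equiv> subd_r r i l"
abbreviation "iH \<equiv> subd_i i l"
abbreviation "sn \<equiv> sub_node r i l"
abbreviation "VH \<equiv> vertices XH rH"
abbreviation "HEH \<equiv> half_edges XH rH"

lemma graph_axioms:
  "finite X" "x \<in> X \<Longrightarrow> r x \<in> X" "x \<in> X \<Longrightarrow> i x \<in> X" "x \<in> X \<Longrightarrow> r (r x) = r x"
  "x \<in> X \<Longrightarrow> i (i x) = x" "x \<in> X \<Longrightarrow> i x = x \<longleftrightarrow> r x = x"
  "x \<in> X \<Longrightarrow> l (i x) = l x" "x \<in> X \<Longrightarrow> l x = 0 \<longleftrightarrow> r x = x"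
  using metrised unfolding is_Nmetrised_graph_def is_graph_def by auto

lemma half_edge_graph: "half_edge_graph X r i"
  unfolding half_edge_graph_def
proof (intro conjI graph_axioms(1) ballI)
  fix e assume "e \<in> HE"
  then have e: "e \<in> X" "r e \<noteq> e" unfolding half_edges_def by auto
  then have "i e \<noteq> e" "i (i e) = e" "i e \<in> X" using graph_axioms(3,5,6) by auto
  then have "r (i e) \<noteq> i e" using graph_axioms(6)[of "i e"] by auto
  then show "i e \<in> HE" unfolding half_edges_def using \<open>i e \<in> X\<close> by blast
  show "i (i e) = e" by fact
  show "r e \<in> V" unfolding vertices_def using e graph_axioms(2,4) by blast
qed

lemma connected: "connected_graph X r i"
  using metrised unfolding is_Nmetrised_graph_def is_graph_def connected_graph_def by blast

lemma half_edge_props: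
  assumes "e \<in> HE"
  shows "i e \<in> HE" "i (i e) = e" "r e \<in> V" "r (i e) \<in> V" "l (i e) = l e" "1 \<le> l e" "i e \<noteq> e"
proof -
  have e: "e \<in> X" "r e \<noteq> e" using assms unfolding half_edges_def by auto
  then have "l e \<noteq> 0" using graph_axioms(8) by blast
  then show "1 \<le> l e" by simp
  show "l (i e) = l e" "i e \<noteq> e" using e graph_axioms(6,7) by auto
qed (use half_edge_graphD[OF half_edge_graph assms] in auto)

lemma metric: "metric_half_edge_graph X r i l"
proof -
  obtain x where "x \<in> X" using metrised unfolding is_Nmetrised_graph_def is_graph_def by blast
  then have "r x \<in> V" unfolding vertices_def using graph_axioms by auto
  then show ?thesis
    unfolding metric_half_edge_graph_def using half_edge_graph half_edge_props(5) by blast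
qed

lemma edge_rep_other: "e \<in> HE \<Longrightarrow> edge_rep i e \<noteq> e \<Longrightarrow> edge_rep i e = i e"
  using edge_rep_in[of i e] by auto

lemma sub_node_sym:
  assumes e: "e \<in> HE" and m: "m \<le> l e"
  shows "sn (i e) (l e - m) = sn e m"
proof -
  note props = half_edge_props[OF e]
  have rep: "edge_rep i (i e) = edge_rep i e" using edge_rep_involution[of i e, OF props(2)] .
  consider "m = 0" | "m = l e" | "0 < m" "m < l e" "edge_rep i e = e"
    | "0 < m" "m < l e" "edge_rep i e = i e"
    using m edge_rep_other[OF e] by fastforce
  then show ?thesis
  proof cases
    case 3
    then have "edge_rep i (i e) \<noteq> i e" using rep props(7) by auto
    then show ?thesis unfolding sub_node_def using 3 props by auto
  qed (use props rep in \<open>auto simp: sub_node_def\<close>)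
qed

definition interior_nodes :: "'a snode set" where
  "interior_nodes = {SM c j |c j. c \<in> HE \<and> edge_rep i c = c \<and> 1 \<le> j \<and> j < l c}"

lemma sub_node_cases:
  assumes e: "e \<in> HE" and m: "m \<le> l e"
  shows "sn e m \<in> SV ` V \<union> interior_nodes"
proof -
  note props = half_edge_props[OF e]
  consider "m = 0 \<or> m = l e" | "0 < m" "m < l e" "edge_rep i e = e"
    | "0 < m" "m < l e" "edge_rep i e = i e"
    using m edge_rep_other[OF e] by fastforce
  then show ?thesis
  proof cases
    case 3
    then have "edge_rep i (i e) = i e" using edge_rep_involution[of i e] props(2) by simp
    then have "SM (i e) (l e - m) \<in> interior_nodes"
      unfolding interior_nodes_def using 3 props by auto
    then show ?thesis unfolding sub_node_def using 3 props(7) by auto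
  qed (use props e in \<open>auto simp: sub_node_def interior_nodes_def\<close>)
qed

lemma sub_node_not_SE: "sn e m \<noteq> SE a b"
  unfolding sub_node_def by auto

lemma subd_X_eq: "XH = SV ` V \<union> interior_nodes \<union> {SE e j |e j. e \<in> HE \<and> j < l e}"
  unfolding subd_X_def interior_nodes_def ..

lemma subd_vertices_eq: "VH = SV ` V \<union> interior_nodes"
  unfolding vertices_def subd_X_eq using sub_node_not_SE by (auto simp: interior_nodes_def)

lemma subd_half_edges_eq: "HEH = {SE e j |e j. e \<in> HE \<and> j < l e}"
  unfolding half_edges_def subd_X_eq using sub_node_not_SE by (fastforce simp: interior_nodes_def)

lemma sub_node_in_subd_vertices: "e \<in> HE \<Longrightarrow> m \<le> l e \<Longrightarrow> sn e m \<in> VH"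
  using sub_node_cases subd_vertices_eq by auto

lemma subd_r_subd_i_SE: "e \<in> HE \<Longrightarrow> j < l e \<Longrightarrow> rH (iH (SE e j)) = sn e (j + 1)"
  using sub_node_sym[of e "j + 1"] half_edge_props(5) by (simp add: diff_diff_left)

lemma subd_r_subd_i_SE_back:
  assumes c: "c \<in> HE" and n: "1 \<le> n" "n \<le> l c"
  shows "rH (iH (SE (i c) (l c - n))) = sn c (n - 1)"
proof -
  note props = half_edge_props[OF c]
  have "rH (iH (SE (i c) (l c - n))) = sn (i c) (l c - (n - 1))"
    using subd_r_subd_i_SE[OF props(1), of "l c - n"] props(5) n by (simp add: Suc_diff_le)
  also have "\<dots> = sn c (n - 1)" using sub_node_sym[OF c, of "n - 1"] n by simp
  finally show ?thesis .
qed

lemma finite_subd_X: "finite XH"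
proof -
  have finH: "finite HE" and finV: "finite V" using half_edge_graph_finite[OF half_edge_graph] by blast+
  then have fin: "finite (f ` (SIGMA c:HE. {..<l c}))" for f :: "'a \<times> nat \<Rightarrow> 'a snode" by blast
  have "interior_nodes \<subseteq> (\<lambda>(c, j). SM c j) ` (SIGMA c:HE. {..<l c})"
    unfolding interior_nodes_def by auto
  then have "finite interior_nodes" using fin by (rule finite_subset)
  moreover have "{SE e j |e j. e \<in> HE \<and> j < l e} \<subseteq> (\<lambda>(c, j). SE c j) ` (SIGMA c:HE. {..<l c})"
    by auto
  then have "finite {SE e j |e j. e \<in> HE \<and> j < l e}" using fin by (rule finite_subset)
  ultimately show ?thesis unfolding subd_X_eq using finV by blast
qed

lemma half_edge_graph_subd: "half_edge_graph XH rH iH"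
  unfolding half_edge_graph_def
proof (intro conjI finite_subd_X ballI)
  fix x assume "x \<in> HEH"
  then obtain e j where x: "x = SE e j" "e \<in> HE" "j < l e" unfolding subd_half_edges_eq by auto
  note props = half_edge_props[OF x(2)]
  show "iH x \<in> HEH" unfolding subd_half_edges_eq x using props x(3) by auto
  show "iH (iH x) = x" using x props by auto
  show "rH x \<in> VH" using x sub_node_in_subd_vertices by auto
qed

lemma unit_lengths_subd: "\<forall>e\<in>HEH. unit_len e = 1"
  unfolding subd_half_edges_eq by auto

lemma metric_subd: "metric_half_edge_graph XH rH iH unit_len"
  unfolding metric_half_edge_graph_def
proof (intro conjI half_edge_graph_subd)
  show "VH \<noteq> {}" using metric unfolding metric_half_edge_graph_def subd_vertices_eq by blast
  show "\<forall>e\<in>HEH. unit_len (iH e) = unit_len e" unfolding subd_half_edges_eq by auto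
qed

lemma incident_subd_SV:
  assumes v: "v \<in> V"
  shows "{x\<in>HEH. rH x = SV v} = (\<lambda>e. SE e 0) ` {e\<in>HE. r e = v}"
proof
  show "{x\<in>HEH. rH x = SV v} \<subseteq> (\<lambda>e. SE e 0) ` {e\<in>HE. r e = v}"
  proof
    fix x assume "x \<in> {x\<in>HEH. rH x = SV v}"
    then obtain e j where x: "x = SE e j" "e \<in> HE" "j < l e" "sn e j = SV v"
      unfolding subd_half_edges_eq by auto
    then have "j = 0" "r e = v" unfolding sub_node_def by (auto split: if_splits)
    then show "x \<in> (\<lambda>e. SE e 0) ` {e\<in>HE. r e = v}" using x by auto
  qed
  show "(\<lambda>e. SE e 0) ` {e\<in>HE. r e = v} \<subseteq> {x\<in>HEH. rH x = SV v}"
    unfolding subd_half_edges_eq using half_edge_props(6) by (force simp: sub_node_def)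
qed

lemma incident_subd_SM:
  assumes c: "c \<in> HE" "edge_rep i c = c" and m: "1 \<le> m" "m < l c"
  shows "{x\<in>HEH. rH x = SM c m} = {SE (i c) (l c - m), SE c m}"
proof
  note props = half_edge_props[OF c(1)]
  show "{x\<in>HEH. rH x = SM c m} \<subseteq> {SE (i c) (l c - m), SE c m}"
  proof
    fix x assume "x \<in> {x\<in>HEH. rH x = SM c m}"
    then obtain e j where x: "x = SE e j" "e \<in> HE" "j < l e" "sn e j = SM c m"
      unfolding subd_half_edges_eq by auto
    show "x \<in> {SE (i c) (l c - m), SE c m}"
    proof (cases "edge_rep i e = e")
      case True
      then have "e = c \<and> j = m" using x(4) unfolding sub_node_def by (auto split: if_splits)
      then show ?thesis using x by auto
    next
      case False
      then have "i e = c" "l e - j = m" using x(4) unfolding sub_node_def by (auto split: if_splits)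
      then have "e = i c" "j = l c - m" using half_edge_props(2,5)[OF x(2)] x(3) by auto
      then show ?thesis using x by auto
    qed
  qed
  have "sn c m = SM c m" unfolding sub_node_def using c m by auto
  moreover have "sn (i c) (l c - m) = SM c m" using sub_node_sym[OF c(1), of m] m calculation by simp
  ultimately show "{SE (i c) (l c - m), SE c m} \<subseteq> {x\<in>HEH. rH x = SM c m}"
    unfolding subd_half_edges_eq using props m c by auto
qed

lemma interpolate_sub_node:
  assumes g: "g \<in> PL X r i l" and e: "e \<in> HE" and m: "m \<le> l e"
  shows "interpolate r i l g (sn e m) = g (r e) + int m * ((g (r (i e)) - g (r e)) div int (l e))"
proof -
  note props = half_edge_props[OF e]
  define s where "s = (g (r (i e)) - g (r e)) div int (l e)"
  have "int (l e) dvd g (r e) - g (r (i e))" using g e unfolding PL_def by blast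
  then have dvd: "int (l e) dvd g (r (i e)) - g (r e)" by (subst dvd_diff_commute)
  then have ds: "g (r (i e)) - g (r e) = int (l e) * s" unfolding s_def by simp
  have neg: "(g (r e) - g (r (i e))) div int (l e) = - s"
    using dvd_neg_div[OF dvd] unfolding s_def by simp
  consider "m = 0" | "m = l e" | "0 < m" "m < l e" "edge_rep i e = e"
    | "0 < m" "m < l e" "edge_rep i e \<noteq> e"
    using m by fastforce
  then have "interpolate r i l g (sn e m) = g (r e) + int m * s"
  proof cases
    case 2 then show ?thesis unfolding sub_node_def interpolate_def using props(6) ds by simp
  next
    case 4
    then have "interpolate r i l g (sn e m) = g (r (i e)) - int (l e - m) * s"
      unfolding sub_node_def interpolate_def using props(2,5) neg by simp
    then show ?thesis using ds m by (simp add: of_nat_diff algebra_simps)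
  qed (auto simp: sub_node_def interpolate_def s_def)
  then show ?thesis unfolding s_def .
qed

lemma unit_lap_interpolate_vertex:
  assumes g: "g \<in> PL X r i l" and v: "v \<in> V"
  shows "unit_lap XH rH iH (interpolate r i l g) (SV v) = laplacian X r i l g v"
proof -
  let ?S = "{e\<in>HE. r e = v}"
  let ?g = "interpolate r i l g"
  have inj: "inj_on (\<lambda>e. SE e 0) ?S" by (auto intro: inj_onI)
  have "unit_lap XH rH iH ?g (SV v) = (\<Sum>x\<in>(\<lambda>e. SE e 0) ` ?S. ?g (SV v) - ?g (rH (iH x)))"
    unfolding unit_lap_def incident_subd_SV[OF v] ..
  also have "\<dots> = (\<Sum>e\<in>?S. ?g (SV v) - ?g (rH (iH (SE e 0))))"
    by (rule sum.reindex[OF inj, unfolded comp_def])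
  also have "\<dots> = (\<Sum>e\<in>?S. (g v - g (r (i e))) div int (l e))"
  proof (rule sum.cong[OF refl])
    fix e assume e: "e \<in> ?S"
    then have "0 < l e" using half_edge_props(6) by force
    then have "?g (rH (iH (SE e 0))) = g v + (g (r (i e)) - g v) div int (l e)"
      using e subd_r_subd_i_SE[of e 0] interpolate_sub_node[OF g, of e 1] by auto
    moreover have "int (l e) dvd g (r (i e)) - g v"
      using g e unfolding PL_def by (auto simp: dvd_diff_commute)
    ultimately show "?g (SV v) - ?g (rH (iH (SE e 0))) = (g v - g (r (i e))) div int (l e)"
      using dvd_neg_div[of "int (l e)" "g (r (i e)) - g v"] unfolding interpolate_def by simp
  qed
  also have "\<dots> = laplacian X r i l g v" unfolding laplacian_def using v by simp
  finally show ?thesis .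
qed

lemma unit_lap_interpolate_interior:
  assumes g: "g \<in> PL X r i l" and y: "y \<in> interior_nodes"
  shows "unit_lap XH rH iH (interpolate r i l g) y = 0"
proof -
  obtain c m where cm: "y = SM c m" "c \<in> HE" "edge_rep i c = c" "1 \<le> m" "m < l c"
    using y unfolding interior_nodes_def by auto
  let ?g = "interpolate r i l g"
  define s where "s = (g (r (i c)) - g (r c)) div int (l c)"
  have at: "?g (sn c n) = g (r c) + int n * s" if "n \<le> l c" for n
    using interpolate_sub_node[OF g cm(2) that] unfolding s_def .
  have "sn c m = SM c m" unfolding sub_node_def using cm by auto
  moreover have "SE (i c) (l c - m) \<noteq> SE c m" using half_edge_props(7)[OF cm(2)] by simp
  ultimately have "unit_lap XH rH iH ?g y = (?g (sn c m) - ?g (sn c (m - 1))) + (?g (sn c m) - ?g (sn c (m + 1)))"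
    unfolding unit_lap_def cm(1) incident_subd_SM[OF cm(2-5)]
    using subd_r_subd_i_SE[OF cm(2,5)] subd_r_subd_i_SE_back[OF cm(2), of m] cm(4,5) by simp
  also have "\<dots> = 0" using at[of m] at[of "m - 1"] at[of "m + 1"] cm(4,5) by (simp add: of_nat_diff algebra_simps)
  finally show ?thesis .
qed

lemma lift_divisor_outside: "D \<in> divisors X r \<Longrightarrow> y \<notin> VH \<Longrightarrow> lift_divisor D y = 0"
  unfolding lift_divisor_def divisors_def subd_vertices_eq by (cases y) auto

lemma lift_divisor_divisors: "D \<in> divisors X r \<Longrightarrow> lift_divisor D \<in> divisors XH rH"
  using lift_divisor_outside unfolding divisors_def by blast

lemma lin_equiv_lift:
  assumes "lin_equiv X r i l D1 D2"
  obtains g where "\<forall>y\<in>VH. lift_divisor D1 y - lift_divisor D2 y = unit_lap XH rH iH g y"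
proof -
  obtain g where g: "g \<in> PL X r i l" "(\<lambda>x. D1 x - D2 x) = laplacian X r i l g"
    using assms unfolding lin_equiv_def by blast
  have "lift_divisor D1 y - lift_divisor D2 y = unit_lap XH rH iH (interpolate r i l g) y"
    if y: "y \<in> VH" for y
  proof (cases "y \<in> interior_nodes")
    case True
    then show ?thesis
      using unit_lap_interpolate_interior[OF g(1)] unfolding lift_divisor_def interior_nodes_def by auto
  next
    case False
    then obtain v where "v \<in> V" "y = SV v" using y subd_vertices_eq by auto
    then show ?thesis
      using unit_lap_interpolate_vertex[OF g(1)] fun_cong[OF g(2), of v] unfolding lift_divisor_def by simp
  qed
  then show thesis using that by blast
qed

lemma deg_lift_divisor:
  assumes D: "D \<in> divisors X r"
  shows "deg XH rH (lift_divisor D) = deg X r D"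
proof -
  have "deg XH rH (lift_divisor D) = sum (lift_divisor D) (SV ` V)"
    unfolding deg_def
    by (rule sum.mono_neutral_right)
      (use half_edge_graph_finite(2)[OF half_edge_graph_subd] in
        \<open>auto simp: subd_vertices_eq interior_nodes_def lift_divisor_def\<close>)
  also have "\<dots> = sum (lift_divisor D \<circ> SV) V" by (rule sum.reindex) (auto intro: inj_onI)
  also have "\<dots> = deg X r D" unfolding deg_def lift_divisor_def by simp
  finally show ?thesis .
qed

lemma sub_node_path:
  assumes e: "e \<in> HE"
  shows "m \<le> l e \<Longrightarrow> (SV (r e), sn e m) \<in> (adjacent XH rH iH)\<^sup>*"
proof (induction m)
  case 0 then show ?case unfolding sub_node_def by simp
next
  case (Suc m)
  have "SE e m \<in> HEH" unfolding subd_half_edges_eq using e Suc.prems by auto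
  moreover have "rH (iH (SE e m)) = sn e (Suc m)" using subd_r_subd_i_SE[OF e, of m] Suc.prems by simp
  ultimately have "(sn e m, sn e (Suc m)) \<in> adjacent XH rH iH" unfolding adjacent_def by force
  with Suc show ?case by (simp add: rtrancl_into_rtrancl)
qed

lemma connected_subd: "connected_graph XH rH iH"
proof -
  let ?A = "adjacent XH rH iH"
  have "sym ?A"
  proof (rule symI)
    fix y z assume "(y, z) \<in> ?A"
    then obtain x where x: "x \<in> HEH" "y = rH x" "z = rH (iH x)" unfolding adjacent_def by auto
    then show "(z, y) \<in> ?A"
      using half_edge_graphD(1,2)[OF half_edge_graph_subd x(1)] unfolding adjacent_def by force
  qed
  then have sym: "sym (?A\<^sup>*)" by (rule sym_rtrancl)
  have lift_path: "(SV u, SV w) \<in> ?A\<^sup>*" if "(u, w) \<in> (adjacent X r i)\<^sup>*" for u w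
    using that
  proof (induction rule: rtrancl_induct)
    case (step y z)
    then obtain e where e: "e \<in> HE" "y = r e" "z = r (i e)" unfolding adjacent_def by auto
    have "sn e (l e) = SV (r (i e))" unfolding sub_node_def using half_edge_props(6)[OF e(1)] by auto
    then have "(SV y, SV z) \<in> ?A\<^sup>*" using sub_node_path[OF e(1), of "l e"] e by simp
    with step.IH show ?case by (rule rtrancl_trans)
  qed simp
  have from_vertex: "\<exists>u\<in>V. (SV u, y) \<in> ?A\<^sup>*" if "y \<in> VH" for y
  proof (cases "y \<in> interior_nodes")
    case True
    then obtain c m where cm: "y = SM c m" "c \<in> HE" "edge_rep i c = c" "1 \<le> m" "m < l c"
      unfolding interior_nodes_def by auto
    then have "sn c m = y" unfolding sub_node_def by auto
    then show ?thesis using sub_node_path[OF cm(2), of m] half_edge_props(3)[OF cm(2)] cm(5) by auto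
  qed (use that subd_vertices_eq in auto)
  show ?thesis unfolding connected_graph_def
  proof (intro ballI)
    fix y z assume "y \<in> VH" "z \<in> VH"
    then obtain u w where u: "u \<in> V" "(SV u, y) \<in> ?A\<^sup>*" and w: "w \<in> V" "(SV w, z) \<in> ?A\<^sup>*"
      using from_vertex by meson
    have "(y, SV u) \<in> ?A\<^sup>*" using sym u(2) by (rule symD)
    moreover have "(SV u, SV w) \<in> ?A\<^sup>*" using lift_path connected u(1) w(1) unfolding connected_graph_def by blast
    ultimately show "(y, z) \<in> ?A\<^sup>*" using w(2) by (meson rtrancl_trans)
  qed
qed

lemma bare_path_sub_node:
  assumes c: "c \<in> HE" "edge_rep i c = c"
  shows "bare_path XH rH iH (lift_divisor E) (sn c) (l c) (\<lambda>n. SE (i c) (l c - n)) (\<lambda>n. SE c n)"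
  unfolding bare_path_def
proof (intro conjI allI impI)
  fix n assume "n \<le> l c" then show "sn c n \<in> VH" using sub_node_in_subd_vertices[OF c(1)] by simp
next
  fix n assume n: "0 < n \<and> n < l c"
  then have sn: "sn c n = SM c n" unfolding sub_node_def using c by auto
  show "lift_divisor E (sn c n) = 0" unfolding sn lift_divisor_def by simp
  show "{e\<in>HEH. rH e = sn c n} = {SE (i c) (l c - n), SE c n}"
    unfolding sn using incident_subd_SM[OF c, of n] n by simp
  show "SE (i c) (l c - n) \<noteq> SE c n" using half_edge_props(7)[OF c(1)] by simp
  show "rH (iH (SE (i c) (l c - n))) = sn c (n - 1)" using subd_r_subd_i_SE_back[OF c(1), of n] n by simp
  show "rH (iH (SE c n)) = sn c (n + 1)" using subd_r_subd_i_SE[OF c(1), of n] n by simp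
qed

text \<open>Here the absence of loops is used: the two ends of a subdivided edge are distinct.\<close>
lemma inj_on_sub_node:
  assumes c: "c \<in> HE" and loopless: "r c \<noteq> r (i c)"
  shows "inj_on (sn c) {..l c}"
  using c loopless half_edge_props(6)[OF c] by (intro inj_onI) (auto simp: sub_node_def split: if_splits)

lemma chip_reachable_lift_vertex:
  assumes D: "D \<in> divisors X r" "1 \<le> rank X r i l D" and v: "v \<in> V"
  shows "chip_reachable XH rH iH (lift_divisor D) (SV v)"
proof -
  obtain E where E: "E \<in> divisors X r" "effective E" "lin_equiv X r i l E D" "1 \<le> E v"
    using rank_ge_1_imp_chip[OF metric D v] .
  obtain g where g: "\<forall>y\<in>VH. lift_divisor E y - lift_divisor D y = unit_lap XH rH iH g y"
    using lin_equiv_lift[OF E(3)] .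
  have vH: "SV v \<in> VH" using v subd_vertices_eq by auto
  have "chip_reachable XH rH iH (lift_divisor E) (SV v)"
    unfolding chip_reachable_def effective_after_def
    using E(2,4) by (intro exI[of _ "\<lambda>_. 0"])
      (auto simp: unit_lap_const lift_divisor_def effective_def split: snode.split)
  then show ?thesis using chip_reachable_iff_equiv[OF g vH] by blast
qed

lemma rank_lift_divisor_ge_1:
  assumes loopless: "\<forall>e\<in>HE. r e \<noteq> r (i e)" and D: "D \<in> divisors X r" "1 \<le> rank X r i l D"
  shows "1 \<le> rank XH rH iH unit_len (lift_divisor D)"
proof -
  have "chip_reachable XH rH iH (lift_divisor D) y" if y: "y \<in> VH" for y
  proof (cases "y \<in> interior_nodes")
    case True
    then obtain c m where cm: "y = SM c m" "c \<in> HE" "edge_rep i c = c" "1 \<le> m" "m < l c"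
      unfolding interior_nodes_def by auto
    text \<open>Pass to the lift of an effective representative \<open>E\<close> of \<open>D\<close>, which is effective and has no
      chips on the interior nodes, so that the bare path lemma applies.\<close>
    obtain v where "v \<in> V" using metric unfolding metric_half_edge_graph_def by blast
    then obtain E where E: "E \<in> divisors X r" "effective E" "lin_equiv X r i l E D"
      using rank_ge_1_imp_chip[OF metric D] by metis
    obtain g where g: "\<forall>y\<in>VH. lift_divisor E y - lift_divisor D y = unit_lap XH rH iH g y"
      using lin_equiv_lift[OF E(3)] .
    have E_nonneg: "\<forall>y\<in>VH. 0 \<le> lift_divisor E y"
      using E(2) unfolding lift_divisor_def effective_def by (auto split: snode.split)
    have "sn c 0 = SV (r c)" "sn c (l c) = SV (r (i c))"
      unfolding sub_node_def using half_edge_props(6)[OF cm(2)] by auto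
    then have "chip_reachable XH rH iH (lift_divisor E) (sn c 0)"
      "chip_reachable XH rH iH (lift_divisor E) (sn c (l c))"
      using chip_reachable_lift_vertex[OF D] chip_reachable_iff_equiv[OF g]
        half_edge_props(3,4)[OF cm(2)] subd_vertices_eq by auto
    then have "chip_reachable XH rH iH (lift_divisor E) (sn c m)"
      using chip_reachable_bare_path_interior[OF half_edge_graph_subd connected_subd E_nonneg
          bare_path_sub_node[OF cm(2,3)] inj_on_sub_node[OF cm(2)]] loopless cm by auto
    moreover have "sn c m = y" unfolding sub_node_def using cm by auto
    ultimately show ?thesis using chip_reachable_iff_equiv[OF g y] by simp
  qed (use y subd_vertices_eq chip_reachable_lift_vertex[OF D] in auto)
  then show ?thesis
    using rank_ge_1_if_chip_reachable[OF metric_subd unit_lengths_subd lift_divisor_divisors[OF D(1)]]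
    by blast
qed

end

theorem lemma4p10:
  fixes X :: "'a set" and r i :: "'a \<Rightarrow> 'a" and l :: "'a \<Rightarrow> nat"
  assumes "is_Nmetrised_graph X r i l"
    and "\<forall>e\<in>half_edges X r. r e \<noteq> r (i e)"
  shows "dgon X r i l \<ge> dgon (subd_X X r i l) (subd_r r i l) (subd_i i l) unit_len"
proof -
  interpret subdivision X r i l by unfold_locales (rule assms(1))
  obtain D where D: "D \<in> divisors X r" "1 \<le> rank X r i l D" "deg X r D = dgon X r i l"
    using dgon_attained[OF metric] by blast
  have "dgon XH rH iH unit_len \<le> deg XH rH (lift_divisor D)"
    using dgon_le[OF metric_subd lift_divisor_divisors[OF D(1)]]
      rank_lift_divisor_ge_1[OF assms(2) D(1,2)] .
  then show ?thesis using deg_lift_divisor[OF D(1)] D(3) by simp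
qed

end
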